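(* Let $\alpha:X\to X$ be a homeomorphism of a compact metric space $X$ and $\mathscr V$ a line bundle over $X$. Then for every $n\geq 1$ there is a Hilbert $C(X)$-bimodule isomorphism $\psi:\Gamma(\mathscr V,\alpha)^{\otimes n}\to\Gamma(\mathscr V^{(n)},\alpha^n)$ such that for $\xi_1,\dots,\xi_n\in\Gamma(\mathscr V,\alpha)$ and $x\in X$, \[\psi(\xi_1\otimes\xi_2\otimes\cdots\otimes\xi_n)(x)=\xi_1(\alpha^{n-1}(x))\otimes\xi_2(\alpha^{n-2}(x))\otimes\cdots\otimes\xi_n(x).\] (For $n=0$, $\psi$ is the identity of $C(X)$.)
   Context: $\mathscr V$ is a Hermitian complex line bundle. For a line bundle $\mathscr W$ and a homeomorphism $\beta$, $\Gamma(\mathscr W,\beta)$ denotes the Hilbert $C(X)$-bimodule whose underlying space is the space of continuous sections of $\mathscr W$, with right action $(\xi f)(x)=\xi(x)f(x)$, right inner product $\langle\xi,\eta\rangle(x)=\langle\xi(x),\eta(x)\rangle_{\mathscr W_x}$, left action $f\cdot\xi=\xi\,(f\circ\beta)$ and left inner product $\langle\eta,\xi\rangle\circ\beta^{-1}$. $\Gamma(\mathscr V,\alpha)^{\otimes n}$ is the $n$-fold $C(X)$-balanced interior tensor product of Hilbert bimodules, with right inner product $\langle\xi_1\otimes\eta_1,\xi_2\otimes\eta_2\rangle=\langle\eta_1,\langle\xi_1,\xi_2\rangle\eta_2\rangle$ and analogous left inner product. $\mathscr V^{(n)}=(\alpha^{n-1})^*\mathscr V\otimes(\alpha^{n-2})^*\mathscr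 V\otimes\cdots\otimes\alpha^*\mathscr V\otimes\mathscr V$, whose fibre at $x$ is $\mathscr V_{\alpha^{n-1}(x)}\otimes\cdots\otimes\mathscr V_{\alpha(x)}\otimes\mathscr V_x$; $\mathscr V^{(0)}=X\times\mathbb C$. A Hilbert bimodule isomorphism is a bijective bimodule map preserving both inner products. *)

theory Defs
  imports "HOL-Analysis.Analysis"
begin

text \<open>A Hermitian line bundle over X is given by an open cover U and transition
functions g with |g| = 1; fibre vectors are local coordinate families v with
v i = g i j x * v j on overlaps (and v i = 0 when x is not in U i).\<close>

definition is_cocycle :: "('i \<Rightarrow> 'a::topological_space set) \<Rightarrow> ('i \<Rightarrow> 'i \<Rightarrow> 'a \<Rightarrow> complex) \<Rightarrow> bool" where
  "is_cocycle U g \<longleftrightarrow> (\<forall>i. open (U i)) \<and> (\<Union>i. U i) = UNIV \<and>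
     (\<forall>i j. continuous_on (U i \<inter> U j) (g i j)) \<and>
     (\<forall>i j x. x \<in> U i \<inter> U j \<longrightarrow> cmod (g i j x) = 1) \<and>
     (\<forall>i x. x \<in> U i \<longrightarrow> g i i x = 1) \<and>
     (\<forall>i j k x. x \<in> U i \<inter> U j \<inter> U k \<longrightarrow> g i j x * g j k x = g i k x)"

definition fib :: "('i \<Rightarrow> 'a set) \<Rightarrow> ('i \<Rightarrow> 'i \<Rightarrow> 'a \<Rightarrow> complex) \<Rightarrow> 'a \<Rightarrow> ('i \<Rightarrow> complex) set" where
  "fib U g x = {v. (\<forall>i. x \<notin> U i \<longrightarrow> v i = 0) \<and> (\<forall>i j. x \<in> U i \<inter> U j \<longrightarrow> v i = g i j x * v j)}"

definition fip :: "('i \<Rightarrow> 'a set) \<Rightarrow> 'a \<Rightarrow> ('i \<Rightarrow> complex) \<Rightarrow> ('i \<Rightarrow> complex) \<Rightarrow> complex" where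
  "fip U x v w = (let i = (SOME i. x \<in> U i) in cnj (v i) * w i)"

definition sections :: "('i \<Rightarrow> 'a::topological_space set) \<Rightarrow> ('i \<Rightarrow> 'i \<Rightarrow> 'a \<Rightarrow> complex) \<Rightarrow> ('a \<Rightarrow> 'i \<Rightarrow> complex) set" where
  "sections U g = {\<xi>. (\<forall>x. \<xi> x \<in> fib U g x) \<and> (\<forall>i. continuous_on (U i) (\<lambda>x. \<xi> x i))}"

definition CX :: "('a::topological_space \<Rightarrow> complex) set" where
  "CX = {f. continuous_on UNIV f}"

definition bm_ract :: "('a \<Rightarrow> 'i \<Rightarrow> complex) \<Rightarrow> ('a \<Rightarrow> complex) \<Rightarrow> ('a \<Rightarrow> 'i \<Rightarrow> complex)" where
  "bm_ract \<xi> f = (\<lambda>x i. f x * \<xi> x i)"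

definition bm_lact :: "('a \<Rightarrow> 'a) \<Rightarrow> ('a \<Rightarrow> complex) \<Rightarrow> ('a \<Rightarrow> 'i \<Rightarrow> complex) \<Rightarrow> ('a \<Rightarrow> 'i \<Rightarrow> complex)" where
  "bm_lact \<beta> f \<xi> = (\<lambda>x i. f (\<beta> x) * \<xi> x i)"

definition bm_rip :: "('i \<Rightarrow> 'a set) \<Rightarrow> ('a \<Rightarrow> 'i \<Rightarrow> complex) \<Rightarrow> ('a \<Rightarrow> 'i \<Rightarrow> complex) \<Rightarrow> 'a \<Rightarrow> complex" where
  "bm_rip U \<xi> \<eta> = (\<lambda>x. fip U x (\<xi> x) (\<eta> x))"

definition bm_lip :: "('i \<Rightarrow> 'a set) \<Rightarrow> ('a \<Rightarrow> 'a) \<Rightarrow> ('a \<Rightarrow> 'i \<Rightarrow> complex) \<Rightarrow> ('a \<Rightarrow> 'i \<Rightarrow> complex) \<Rightarrow> 'a \<Rightarrow> complex" where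
  "bm_lip U \<beta> \<xi> \<eta> = (\<lambda>x. fip U (inv \<beta> x) (\<eta> (inv \<beta> x)) (\<xi> (inv \<beta> x)))"

definition sec_add :: "('a \<Rightarrow> 'i \<Rightarrow> complex) \<Rightarrow> ('a \<Rightarrow> 'i \<Rightarrow> complex) \<Rightarrow> ('a \<Rightarrow> 'i \<Rightarrow> complex)" where
  "sec_add \<xi> \<eta> = (\<lambda>x i. \<xi> x i + \<eta> x i)"

definition sec_scale :: "complex \<Rightarrow> ('a \<Rightarrow> 'i \<Rightarrow> complex) \<Rightarrow> ('a \<Rightarrow> 'i \<Rightarrow> complex)" where
  "sec_scale c \<xi> = (\<lambda>x i. c * \<xi> x i)"

text \<open>Index lists ks of length n; position k (0-based) is the factor pulled back by alpha^(n-1-k).\<close>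
definition pow_U :: "('a \<Rightarrow> 'a) \<Rightarrow> ('i \<Rightarrow> 'a set) \<Rightarrow> nat \<Rightarrow> 'i list \<Rightarrow> 'a set" where
  "pow_U \<alpha> U n ks = {x. length ks = n \<and> (\<forall>k<n. (\<alpha> ^^ (n - 1 - k)) x \<in> U (ks ! k))}"

definition pow_g :: "('a \<Rightarrow> 'a) \<Rightarrow> ('i \<Rightarrow> 'i \<Rightarrow> 'a \<Rightarrow> complex) \<Rightarrow> nat \<Rightarrow> 'i list \<Rightarrow> 'i list \<Rightarrow> 'a \<Rightarrow> complex" where
  "pow_g \<alpha> g n ks ls x = (\<Prod>k<n. g (ks ! k) (ls ! k) ((\<alpha> ^^ (n - 1 - k)) x))"

text \<open>Elementary tensor v_1 (x) ... (x) v_n of fibre vectors, in local coordinates.\<close>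
definition tens_fib :: "('i \<Rightarrow> complex) list \<Rightarrow> 'i list \<Rightarrow> complex" where
  "tens_fib vs = (\<lambda>ks. if length ks = length vs then (\<Prod>k<length vs. (vs ! k) (ks ! k)) else 0)"

definition elem_image :: "('a \<Rightarrow> 'a) \<Rightarrow> nat \<Rightarrow> ('a \<Rightarrow> 'i \<Rightarrow> complex) list \<Rightarrow> 'a \<Rightarrow> 'i list \<Rightarrow> complex" where
  "elem_image \<alpha> n \<xi>s = (\<lambda>x. tens_fib (map (\<lambda>k. (\<xi>s ! k) ((\<alpha> ^^ (n - 1 - k)) x)) [0..<n]))"

text \<open>Formal finite sums of elementary tensors xi_1 (x) ... (x) xi_n (a list of n-lists of sections).
The tensor power is the completion of these modulo null vectors for the inner-product seminorm;
elements of the completion are represented by Cauchy sequences of formal sums.\<close>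

definition tp_wf :: "('i \<Rightarrow> 'a::topological_space set) \<Rightarrow> ('i \<Rightarrow> 'i \<Rightarrow> 'a \<Rightarrow> complex) \<Rightarrow> nat \<Rightarrow> ('a \<Rightarrow> 'i \<Rightarrow> complex) list list \<Rightarrow> bool" where
  "tp_wf U g n zs \<longleftrightarrow> (\<forall>z\<in>set zs. length z = n \<and> set z \<subseteq> sections U g)"

text \<open>Right inner product of elementary tensors, computed via
 <Xi (x) xi, H (x) eta> = <xi, <Xi,H> . eta>.\<close>
definition rip_el :: "('i \<Rightarrow> 'a set) \<Rightarrow> ('a \<Rightarrow> 'a) \<Rightarrow> ('a \<Rightarrow> 'i \<Rightarrow> complex) list \<Rightarrow> ('a \<Rightarrow> 'i \<Rightarrow> complex) list \<Rightarrow> 'a \<Rightarrow> complex" where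
  "rip_el U \<alpha> xs ys = foldl (\<lambda>f (\<xi>, \<eta>). bm_rip U \<xi> (bm_lact \<alpha> f \<eta>)) (\<lambda>_. 1) (zip xs ys)"

text \<open>Left inner product of elementary tensors, computed via
 lip(xi (x) Xi, eta (x) H) = lip(xi . lip(Xi,H), eta).\<close>
definition lip_el :: "('i \<Rightarrow> 'a set) \<Rightarrow> ('a \<Rightarrow> 'a) \<Rightarrow> ('a \<Rightarrow> 'i \<Rightarrow> complex) list \<Rightarrow> ('a \<Rightarrow> 'i \<Rightarrow> complex) list \<Rightarrow> 'a \<Rightarrow> complex" where
  "lip_el U \<alpha> xs ys = foldr (\<lambda>(\<xi>, \<eta>) h. bm_lip U \<alpha> (bm_ract \<xi> h) \<eta>) (zip xs ys) (\<lambda>_. 1)"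

definition fs_rip :: "('i \<Rightarrow> 'a set) \<Rightarrow> ('a \<Rightarrow> 'a) \<Rightarrow> ('a \<Rightarrow> 'i \<Rightarrow> complex) list list \<Rightarrow> ('a \<Rightarrow> 'i \<Rightarrow> complex) list list \<Rightarrow> 'a \<Rightarrow> complex" where
  "fs_rip U \<alpha> zs ws = (\<lambda>x. \<Sum>z\<leftarrow>zs. \<Sum>w\<leftarrow>ws. rip_el U \<alpha> z w x)"

definition fs_lip :: "('i \<Rightarrow> 'a set) \<Rightarrow> ('a \<Rightarrow> 'a) \<Rightarrow> ('a \<Rightarrow> 'i \<Rightarrow> complex) list list \<Rightarrow> ('a \<Rightarrow> 'i \<Rightarrow> complex) list list \<Rightarrow> 'a \<Rightarrow> complex" where
  "fs_lip U \<alpha> zs ws = (\<lambda>x. \<Sum>z\<leftarrow>zs. \<Sum>w\<leftarrow>ws. lip_el U \<alpha> z w x)"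

definition fs_scale :: "complex \<Rightarrow> ('a \<Rightarrow> 'i \<Rightarrow> complex) list list \<Rightarrow> ('a \<Rightarrow> 'i \<Rightarrow> complex) list list" where
  "fs_scale c zs = map (\<lambda>z. case z of [] \<Rightarrow> [] | \<xi> # r \<Rightarrow> sec_scale c \<xi> # r) zs"

definition fs_diff :: "('a \<Rightarrow> 'i \<Rightarrow> complex) list list \<Rightarrow> ('a \<Rightarrow> 'i \<Rightarrow> complex) list list \<Rightarrow> ('a \<Rightarrow> 'i \<Rightarrow> complex) list list" where
  "fs_diff zs ws = zs @ fs_scale (-1) ws"

definition fs_ract :: "('a \<Rightarrow> 'i \<Rightarrow> complex) list list \<Rightarrow> ('a \<Rightarrow> complex) \<Rightarrow> ('a \<Rightarrow> 'i \<Rightarrow> complex) list list" where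
  "fs_ract zs f = map (\<lambda>z. butlast z @ [bm_ract (last z) f]) zs"

definition fs_lact :: "('a \<Rightarrow> 'a) \<Rightarrow> ('a \<Rightarrow> complex) \<Rightarrow> ('a \<Rightarrow> 'i \<Rightarrow> complex) list list \<Rightarrow> ('a \<Rightarrow> 'i \<Rightarrow> complex) list list" where
  "fs_lact \<alpha> f zs = map (\<lambda>z. bm_lact \<alpha> f (hd z) # tl z) zs"

definition fs_norm :: "('i \<Rightarrow> 'a set) \<Rightarrow> ('a \<Rightarrow> 'a) \<Rightarrow> ('a \<Rightarrow> 'i \<Rightarrow> complex) list list \<Rightarrow> real" where
  "fs_norm U \<alpha> zs = sqrt (Sup (range (\<lambda>x. cmod (fs_rip U \<alpha> zs zs x))))"

definition tp_cauchy :: "('i \<Rightarrow> 'a::topological_space set) \<Rightarrow> ('i \<Rightarrow> 'i \<Rightarrow> 'a \<Rightarrow> complex) \<Rightarrow> ('a \<Rightarrow> 'a) \<Rightarrow> nat \<Rightarrow> (nat \<Rightarrow> ('a \<Rightarrow> 'i \<Rightarrow> complex) list list) \<Rightarrow> bool" where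
  "tp_cauchy U g \<alpha> n Z \<longleftrightarrow> (\<forall>k. tp_wf U g n (Z k)) \<and>
     (\<forall>e>0. \<exists>N. \<forall>m\<ge>N. \<forall>k\<ge>N. fs_norm U \<alpha> (fs_diff (Z m) (Z k)) < e)"

definition unif_conv :: "(nat \<Rightarrow> 'a \<Rightarrow> complex) \<Rightarrow> ('a \<Rightarrow> complex) \<Rightarrow> bool" where
  "unif_conv F f \<longleftrightarrow> (\<forall>e>0. \<exists>N. \<forall>k\<ge>N. \<forall>x. cmod (F k x - f x) < e)"

end

(*
  On formal sums of elementary tensors, \<psi> sends \<xi>_1 \<otimes> ... \<otimes> \<xi>_n to
  x \<mapsto> \<xi>_1(\<alpha>^(n-1) x) \<otimes> ... \<otimes> \<xi>_n(x). In a chart of V^(n) this is a product of chart coordinates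
  of V, so the right inner product of two formal sums is the fibrewise inner product of their
  images, and the seminorm of a formal sum is the sup norm of its image. Hence Cauchy sequences
  of formal sums go to uniformly Cauchy sequences of sections; their uniform limits define \<psi>,
  which is then isometric and compatible with the bimodule structure, the left inner product
  being the right one with swapped arguments, pulled back along \<alpha>^(-n).

  For surjectivity, V^(n) is itself a line bundle (its transition functions are products of
  those of V). Given a partition of unity \<rho>_p subordinate to the charts of V, a section \<eta> of
  V^(n) is the image of a finite sum, over index lists p_1 ... p_n, of elementary tensors built
  from the square roots of the \<rho>_p and the coordinate of \<eta>; the images add up to
  \<eta> * \<Prod>_k \<Sum>_p \<rho>_p = \<eta>.
*)

theory Submission
  imports Defs
begin

lemma sum_list_swap:
  "(\<Sum>z\<leftarrow>zs. \<Sum>w\<leftarrow>ws. f z w) = (\<Sum>w\<leftarrow>ws. \<Sum>z\<leftarrow>zs. (f z w :: 'b::comm_monoid_add))"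
  by (induction zs) (simp_all add: sum_list_addf)

lemma sum_list_sesquilinear:
  "(\<Sum>z\<leftarrow>zs. \<Sum>w\<leftarrow>ws. cnj (f z) * h w) = cnj (\<Sum>z\<leftarrow>zs. f z) * (\<Sum>w\<leftarrow>ws. h w :: complex)"
  by (induction zs) (simp_all add: sum_list_const_mult distrib_right)

lemma sum_list_concat: "sum_list (concat xss) = sum_list (map sum_list xss)"
  by (induction xss) simp_all

lemma sum_list_n_lists_prod:
  fixes h :: "nat \<Rightarrow> 'j \<Rightarrow> 'b::comm_semiring_1"
  shows "(\<Sum>js\<leftarrow>List.n_lists m xs. \<Prod>k<m. h k (js!k)) = (\<Prod>k<m. \<Sum>j\<leftarrow>xs. h k j)"
proof (induction m arbitrary: h)
  case 0
  then show ?case by simp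
next
  case (Suc m)
  have "(\<Sum>js\<leftarrow>List.n_lists (Suc m) xs. \<Prod>k<Suc m. h k (js!k)) =
      (\<Sum>ys\<leftarrow>List.n_lists m xs. \<Sum>y\<leftarrow>xs. h 0 y * (\<Prod>k<m. h (Suc k) (ys!k)))"
    by (simp add: sum_list_concat map_concat o_def prod.lessThan_Suc_shift del: prod.lessThan_Suc)
  also have "\<dots> = (\<Sum>ys\<leftarrow>List.n_lists m xs. (\<Sum>y\<leftarrow>xs. h 0 y) * (\<Prod>k<m. h (Suc k) (ys!k)))"
    by (simp add: sum_list_mult_const)
  also have "\<dots> = (\<Sum>y\<leftarrow>xs. h 0 y) * (\<Prod>k<m. \<Sum>j\<leftarrow>xs. h (Suc k) j)"
    using Suc.IH[of "\<lambda>k. h (Suc k)"] by (simp add: sum_list_const_mult)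
  also have "\<dots> = (\<Prod>k<Suc m. \<Sum>j\<leftarrow>xs. h k j)"
    by (simp only: prod.lessThan_Suc_shift)
  finally show ?case .
qed

lemma continuous_on_funpow:
  fixes f :: "'a::topological_space \<Rightarrow> 'a"
  assumes "continuous_on UNIV f"
  shows "continuous_on S (f ^^ j)"
proof (induction j)
  case 0
  then show ?case by (simp add: id_def)
next
  case (Suc j)
  have "continuous_on S (f \<circ> (f ^^ j))"
    by (rule continuous_on_compose[OF Suc continuous_on_subset[OF assms]]) simp
  then show ?case by simp
qed

lemma continuous_on_vanishing_off_closed:
  assumes "open S" "open T" "closed K" "K \<subseteq> S"
    and "continuous_on (T \<inter> S) f" and "\<And>y. y \<in> T \<Longrightarrow> y \<notin> K \<Longrightarrow> f y = 0"
  shows "continuous_on T f"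
proof -
  have "continuous_on (T - K) f"
    by (rule continuous_on_cong[THEN iffD1, OF refl _ continuous_on_const[of _ 0]]) (use assms(6) in auto)
  then have "continuous_on ((T \<inter> S) \<union> (T - K)) f"
    using assms by (intro continuous_on_open_Un) auto
  moreover have "(T \<inter> S) \<union> (T - K) = T"
    using assms(4) by blast
  ultimately show ?thesis by simp
qed

lemma compact_ball_cover_subordinate:
  fixes U :: "'i \<Rightarrow> 'a::metric_space set"
  assumes "compact (UNIV :: 'a set)" and "\<And>i. open (U i)" and "\<And>x. \<exists>i. x \<in> U i"
  obtains P r c where "finite P" and "\<And>p. cball p (r p) \<subseteq> U (c p)"
    and "UNIV \<subseteq> (\<Union>p\<in>P. ball p (r p))"
proof -
  have "\<exists>i r. r > 0 \<and> cball p r \<subseteq> U i" for p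
  proof -
    obtain i where "p \<in> U i"
      using assms(3) by blast
    then show ?thesis
      using assms(2)[of i] unfolding open_contains_cball by blast
  qed
  then obtain c r where r: "\<And>p. r p > 0" and cball: "\<And>p. cball p (r p) \<subseteq> U (c p)"
    by metis
  have "UNIV \<subseteq> (\<Union>p. ball p (r p))"
    using r by auto
  then obtain P where "finite P" and "UNIV \<subseteq> (\<Union>p\<in>P. ball p (r p))"
    by (rule compactE_image[OF assms(1) open_ball])
  then show ?thesis
    using that cball by blast
qed

(* Unlike subordinate_partition_of_unity, the supports are closed subsets of the charts, so that
   chart coordinates can be extended by zero. *)
lemma compact_partition_of_unity:
  fixes U :: "'i \<Rightarrow> 'a::metric_space set"
  assumes "compact (UNIV :: 'a set)" and "\<And>i. open (U i)" and "\<And>x. \<exists>i. x \<in> U i"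
  obtains ps :: "'a list" and \<rho> :: "'a \<Rightarrow> 'a \<Rightarrow> real" and C :: "'a \<Rightarrow> 'a set" and c :: "'a \<Rightarrow> 'i"
  where "\<And>p. continuous_on UNIV (\<rho> p)" and "\<And>p y. 0 \<le> \<rho> p y"
    and "\<And>p. closed (C p)" and "\<And>p. C p \<subseteq> U (c p)" and "\<And>p y. y \<notin> C p \<Longrightarrow> \<rho> p y = 0"
    and "\<And>y. (\<Sum>p\<leftarrow>ps. \<rho> p y) = 1"
proof -
  obtain P :: "'a set" and r :: "'a \<Rightarrow> real" and c :: "'a \<Rightarrow> 'i"
    where P_fin: "finite P" and cball: "\<And>p. cball p (r p) \<subseteq> U (c p)"
    and P: "UNIV \<subseteq> (\<Union>p\<in>P. ball p (r p))"
    using compact_ball_cover_subordinate[OF assms] by blast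
  obtain ps where ps: "set ps = P" "distinct ps"
    using finite_distinct_list[OF P_fin] by blast
  define \<theta> where "\<theta> p y = max 0 (r p - dist y p)" for p y
  define s where "s y = (\<Sum>p\<in>P. \<theta> p y)" for y
  have \<theta>_nonneg: "0 \<le> \<theta> p y" for p y
    unfolding \<theta>_def by simp
  have s_pos: "s y > 0" for y
  proof -
    obtain p where p: "p \<in> P" "y \<in> ball p (r p)"
      using P by blast
    then have "0 < \<theta> p y"
      unfolding \<theta>_def by (simp add: dist_commute)
    also have "\<theta> p y \<le> s y"
      unfolding s_def by (rule member_le_sum[OF p(1) \<theta>_nonneg P_fin])
    finally show ?thesis .
  qed
  have \<theta>_cont: "continuous_on UNIV (\<theta> p)" for p
    unfolding \<theta>_def by (intro continuous_intros)
  have s_cont: "continuous_on UNIV s"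
    unfolding s_def by (intro continuous_on_sum \<theta>_cont)
  show ?thesis
  proof (rule that[of "\<lambda>p y. \<theta> p y / s y" "\<lambda>p. cball p (r p)" c ps])
    show "continuous_on UNIV (\<lambda>y. \<theta> p y / s y)" for p
      using s_pos by (intro continuous_on_divide \<theta>_cont s_cont) (simp add: less_imp_neq[symmetric])
    show "0 \<le> \<theta> p y / s y" for p y
      using \<theta>_nonneg s_pos[of y] by simp
    show "y \<notin> cball p (r p) \<Longrightarrow> \<theta> p y / s y = 0" for p y
      unfolding \<theta>_def by (simp add: dist_commute)
    show "(\<Sum>p\<leftarrow>ps. \<theta> p y / s y) = 1" for y
      using s_pos[of y] ps
      by (simp add: sum_list_distinct_conv_sum_set sum_divide_distrib[symmetric] s_def)
  qed (use cball in auto)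
qed

lemma fibI:
  "(\<And>i. x \<notin> U i \<Longrightarrow> v i = 0) \<Longrightarrow> (\<And>i j. x \<in> U i \<Longrightarrow> x \<in> U j \<Longrightarrow> v i = g i j x * v j)
    \<Longrightarrow> v \<in> fib U g x"
  unfolding fib_def by blast

lemma fib_zero: "v \<in> fib U g x \<Longrightarrow> x \<notin> U i \<Longrightarrow> v i = 0"
  unfolding fib_def by blast

lemma fib_trans: "v \<in> fib U g x \<Longrightarrow> x \<in> U i \<Longrightarrow> x \<in> U j \<Longrightarrow> v i = g i j x * v j"
  unfolding fib_def by blast

lemma fib_eqI:
  assumes "v \<in> fib U g x" "w \<in> fib U g x" "x \<in> U i" "v i = w i"
  shows "v = w"
proof
  fix j
  show "v j = w j"
    using assms fib_trans[OF assms(1) _ assms(3), of j] fib_trans[OF assms(2) _ assms(3), of j]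
      fib_zero[OF assms(1), of j] fib_zero[OF assms(2), of j]
    by (cases "x \<in> U j") simp_all
qed

lemma sectionsI:
  "(\<And>x. \<xi> x \<in> fib U g x) \<Longrightarrow> (\<And>i. continuous_on (U i) (\<lambda>x. \<xi> x i)) \<Longrightarrow> \<xi> \<in> sections U g"
  unfolding sections_def by blast

lemma sectionsD:
  "\<xi> \<in> sections U g \<Longrightarrow> \<xi> x \<in> fib U g x"
  "\<xi> \<in> sections U g \<Longrightarrow> continuous_on (U i) (\<lambda>x. \<xi> x i)"
  unfolding sections_def by blast+

lemma zero_in_sections: "(\<lambda>x i. 0) \<in> sections U g"
  unfolding sections_def fib_def by auto

lemma sec_add_in_sections:
  assumes "\<xi> \<in> sections U g" "\<eta> \<in> sections U g"
  shows "sec_add \<xi> \<eta> \<in> sections U g"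
proof (rule sectionsI[OF fibI])
  fix x i j
  show "x \<notin> U i \<Longrightarrow> sec_add \<xi> \<eta> x i = 0"
    using fib_zero[OF sectionsD(1)[OF assms(1)]] fib_zero[OF sectionsD(1)[OF assms(2)]]
    by (simp add: sec_add_def)
  assume "x \<in> U i" "x \<in> U j"
  then show "sec_add \<xi> \<eta> x i = g i j x * sec_add \<xi> \<eta> x j"
    using fib_trans[OF sectionsD(1)[OF assms(1)], of x i j] fib_trans[OF sectionsD(1)[OF assms(2)], of x i j]
    by (simp add: sec_add_def distrib_left)
next
  show "continuous_on (U i) (\<lambda>x. sec_add \<xi> \<eta> x i)" for i
    unfolding sec_add_def using assms by (intro continuous_on_add sectionsD(2))
qed

lemma sec_scale_in_sections:
  assumes "\<xi> \<in> sections U g"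
  shows "sec_scale c \<xi> \<in> sections U g"
proof (rule sectionsI[OF fibI])
  fix x i j
  show "x \<notin> U i \<Longrightarrow> sec_scale c \<xi> x i = 0"
    using fib_zero[OF sectionsD(1)[OF assms]] by (simp add: sec_scale_def)
  assume "x \<in> U i" "x \<in> U j"
  then show "sec_scale c \<xi> x i = g i j x * sec_scale c \<xi> x j"
    using fib_trans[OF sectionsD(1)[OF assms], of x i j] by (simp add: sec_scale_def mult.left_commute)
next
  show "continuous_on (U i) (\<lambda>x. sec_scale c \<xi> x i)" for i
    unfolding sec_scale_def using assms by (intro continuous_on_mult continuous_on_const sectionsD(2))
qed

lemma sections_uniform_limit:
  fixes F :: "nat \<Rightarrow> 'a::topological_space \<Rightarrow> 'i \<Rightarrow> complex"
  assumes F: "\<And>k. F k \<in> sections U g"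
    and lim: "uniform_limit UNIV (\<lambda>k (x, i). F k x i) (\<lambda>(x, i). \<xi> x i) sequentially"
  shows "\<xi> \<in> sections U g"
proof (rule sectionsI[OF fibI])
  have pointwise: "(\<lambda>k. F k x i) \<longlonglongrightarrow> \<xi> x i" for x i
    using tendsto_uniform_limitI[OF lim, of "(x, i)"] by simp
  fix x i j
  show "\<xi> x i = 0" if "x \<notin> U i"
  proof (rule LIMSEQ_unique[OF pointwise])
    show "(\<lambda>k. F k x i) \<longlonglongrightarrow> 0"
      using fib_zero[OF sectionsD(1)[OF F] that] by simp
  qed
  show "\<xi> x i = g i j x * \<xi> x j" if "x \<in> U i" "x \<in> U j"
  proof (rule LIMSEQ_unique[OF pointwise])
    show "(\<lambda>k. F k x i) \<longlonglongrightarrow> g i j x * \<xi> x j"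
      using tendsto_mult_left[OF pointwise[of x j]] fib_trans[OF sectionsD(1)[OF F] that] by simp
  qed
  have "uniform_limit (U i) (\<lambda>k x. F k x i) (\<lambda>x. \<xi> x i) sequentially"
    using uniform_limit_compose'[OF lim, of "\<lambda>x. (x, i)" "U i"] by simp
  moreover have "\<forall>\<^sub>F k in sequentially. continuous_on (U i) (\<lambda>x. F k x i)"
    using sectionsD(2)[OF F] by simp
  ultimately show "continuous_on (U i) (\<lambda>x. \<xi> x i)"
    by (intro uniform_limit_theorem[where F=sequentially]) simp_all
qed

locale line_bundle =
  fixes U :: "'i \<Rightarrow> 'a::topological_space set" and g :: "'i \<Rightarrow> 'i \<Rightarrow> 'a \<Rightarrow> complex"
  assumes cocycle: "is_cocycle U g"
begin

lemma open_chart: "open (U i)"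
  and chart_cover: "\<exists>i. x \<in> U i"
  and transition_norm: "x \<in> U i \<Longrightarrow> x \<in> U j \<Longrightarrow> cmod (g i j x) = 1"
  and transition_refl: "x \<in> U i \<Longrightarrow> g i i x = 1"
  and transition_trans: "x \<in> U i \<Longrightarrow> x \<in> U j \<Longrightarrow> x \<in> U k \<Longrightarrow> g i j x * g j k x = g i k x"
  and transition_continuous: "continuous_on (U i \<inter> U j) (g i j)"
  using cocycle unfolding is_cocycle_def by (auto simp: set_eq_iff)

lemma fip_chart:
  assumes "v \<in> fib U g x" "w \<in> fib U g x" "x \<in> U i"
  shows "fip U x v w = cnj (v i) * w i"
proof -
  define j where "j = (SOME j. x \<in> U j)"
  have j: "x \<in> U j"
    unfolding j_def by (rule someI[of _ i]) fact
  have "fip U x v w = cnj (g j i x * v i) * (g j i x * w i)"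
    using fib_trans[OF assms(1) j assms(3)] fib_trans[OF assms(2) j assms(3)]
    by (simp add: fip_def Let_def j_def)
  also have "\<dots> = (g j i x * cnj (g j i x)) * (cnj (v i) * w i)"
    by (simp add: algebra_simps)
  also have "g j i x * cnj (g j i x) = 1"
    using complex_norm_square[of "g j i x"] transition_norm[OF j assms(3)] by simp
  finally show ?thesis by simp
qed

lemma continuous_on_bm_rip:
  assumes "\<xi> \<in> sections U g" "\<eta> \<in> sections U g"
  shows "continuous_on UNIV (bm_rip U \<xi> \<eta>)"
proof -
  have "continuous_on (\<Union>i. U i) (bm_rip U \<xi> \<eta>)"
  proof (rule continuous_on_open_UN[OF open_chart])
    fix i
    have "continuous_on (U i) (\<lambda>x. cnj (\<xi> x i) * \<eta> x i)"
      using assms by (intro continuous_intros sectionsD(2))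
    then show "continuous_on (U i) (bm_rip U \<xi> \<eta>)"
      by (rule continuous_on_cong[THEN iffD1, rotated 2])
        (simp_all add: bm_rip_def fip_chart sectionsD(1) assms)
  qed
  moreover have "(\<Union>i. U i) = UNIV"
    using chart_cover by blast
  ultimately show ?thesis by simp
qed

definition chart_section :: "'i \<Rightarrow> ('a \<Rightarrow> complex) \<Rightarrow> 'a \<Rightarrow> 'i \<Rightarrow> complex" where
  "chart_section i \<phi> = (\<lambda>y j. if y \<in> U j \<and> y \<in> U i then \<phi> y * g j i y else 0)"

lemma chart_section_coord:
  assumes "y \<in> U j" and "y \<notin> U i \<Longrightarrow> \<phi> y = 0"
  shows "chart_section i \<phi> y j = \<phi> y * g j i y"
  using assms by (auto simp: chart_section_def)

lemma chart_section_in_sections: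
  assumes \<phi>: "continuous_on UNIV \<phi>" and K: "closed K" "K \<subseteq> U i" "\<And>y. y \<notin> K \<Longrightarrow> \<phi> y = 0"
  shows "chart_section i \<phi> \<in> sections U g"
proof (rule sectionsI[OF fibI])
  fix y j k
  show "y \<notin> U j \<Longrightarrow> chart_section i \<phi> y j = 0"
    by (simp add: chart_section_def)
  assume jk: "y \<in> U j" "y \<in> U k"
  show "chart_section i \<phi> y j = g j k y * chart_section i \<phi> y k"
  proof (cases "y \<in> U i")
    case True
    then show ?thesis
      using jk transition_trans[OF jk True, symmetric] by (simp add: chart_section_def)
  next
    case False
    then show ?thesis
      using K by (auto simp: chart_section_def)
  qed
next
  fix j
  have "continuous_on (U j \<inter> U i) (\<lambda>y. chart_section i \<phi> y j)"
    by (rule continuous_on_cong[THEN iffD1, OF refl _ continuous_on_mult[OF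
          continuous_on_subset[OF \<phi>] transition_continuous]])
      (auto simp: chart_section_def)
  then show "continuous_on (U j) (\<lambda>y. chart_section i \<phi> y j)"
    using K by (intro continuous_on_vanishing_off_closed[OF open_chart open_chart]) (auto simp: chart_section_def)
qed

end

lemma elem_image_eq:
  "elem_image \<alpha> n \<xi>s x ks =
    (if length ks = n then (\<Prod>k<n. (\<xi>s!k) ((\<alpha>^^(n-1-k)) x) (ks!k)) else 0)"
  by (simp add: elem_image_def tens_fib_def)

(* The map \<psi> on formal sums, before completion. *)
definition fs_image :: "('a \<Rightarrow> 'a) \<Rightarrow> nat \<Rightarrow> ('a \<Rightarrow> 'i \<Rightarrow> complex) list list \<Rightarrow> 'a \<Rightarrow> 'i list \<Rightarrow> complex" where
  "fs_image \<alpha> n zs = (\<lambda>x ks. \<Sum>z\<leftarrow>zs. elem_image \<alpha> n z x ks)"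

lemma fs_image_Nil: "fs_image \<alpha> n [] = (\<lambda>x ks. 0)"
  and fs_image_Cons: "fs_image \<alpha> n (z # zs) = sec_add (elem_image \<alpha> n z) (fs_image \<alpha> n zs)"
  and fs_image_append: "fs_image \<alpha> n (zs @ ws) x ks = fs_image \<alpha> n zs x ks + fs_image \<alpha> n ws x ks"
  and fs_image_single: "fs_image \<alpha> n [z] = elem_image \<alpha> n z"
  by (simp_all add: fs_image_def sec_add_def)

lemma elem_image_scale_head:
  assumes "0 < n" "length z = n"
  shows "elem_image \<alpha> n (case z of [] \<Rightarrow> [] | \<xi> # r \<Rightarrow> sec_scale c \<xi> # r) x ks =
    c * elem_image \<alpha> n z x ks"
proof -
  obtain m \<xi> r where m: "n = Suc m" and z: "z = \<xi> # r"
    using assms by (cases z) auto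
  show ?thesis
    unfolding z list.case elem_image_eq m prod.lessThan_Suc_shift
    by (simp del: prod.lessThan_Suc add: sec_scale_def)
qed

lemma elem_image_lact_head:
  assumes "0 < n" "length z = n"
  shows "elem_image \<alpha> n (bm_lact \<alpha> f (hd z) # tl z) x ks = f ((\<alpha> ^^ n) x) * elem_image \<alpha> n z x ks"
proof -
  obtain m \<xi> r where m: "n = Suc m" and z: "z = \<xi> # r"
    using assms by (cases z) auto
  have "\<alpha> ((\<alpha> ^^ m) x) = (\<alpha> ^^ Suc m) x"
    by simp
  then show ?thesis
    unfolding z list.sel elem_image_eq m prod.lessThan_Suc_shift
    by (simp del: prod.lessThan_Suc funpow.simps add: bm_lact_def)
qed

lemma elem_image_ract_last:
  assumes "0 < n" "length z = n"
  shows "elem_image \<alpha> n (butlast z @ [bm_ract (last z) f]) x ks = f x * elem_image \<alpha> n z x ks"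
proof (cases "length ks = n")
  case True
  obtain m where m: "n = Suc m"
    using assms(1) by (cases n) auto
  have "(butlast z @ [v]) ! k = z ! k" if "k < m" for k v
    using that assms(2) m by (simp add: nth_append nth_butlast)
  moreover have "(butlast z @ [v]) ! m = v" for v
    using assms(2) m by (simp add: nth_append)
  moreover have "last z = z ! m"
    using assms(2) m by (cases z rule: rev_cases) auto
  ultimately show ?thesis
    unfolding elem_image_eq m prod.lessThan_Suc using True m
    by (simp add: bm_ract_def)
qed (simp add: elem_image_eq)

lemma fs_image_scale:
  "0 < n \<Longrightarrow> tp_wf U g n zs \<Longrightarrow> fs_image \<alpha> n (fs_scale c zs) x ks = c * fs_image \<alpha> n zs x ks"
  unfolding fs_image_def fs_scale_def tp_wf_def
  by (simp add: o_def elem_image_scale_head sum_list_const_mult cong: map_cong)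

lemma fs_image_lact:
  "0 < n \<Longrightarrow> tp_wf U g n zs \<Longrightarrow>
    fs_image \<alpha> n (fs_lact \<alpha> f zs) x ks = f ((\<alpha> ^^ n) x) * fs_image \<alpha> n zs x ks"
  unfolding fs_image_def fs_lact_def tp_wf_def
  by (simp add: o_def elem_image_lact_head sum_list_const_mult cong: map_cong)

lemma fs_image_ract:
  "0 < n \<Longrightarrow> tp_wf U g n zs \<Longrightarrow> fs_image \<alpha> n (fs_ract zs f) x ks = f x * fs_image \<alpha> n zs x ks"
  unfolding fs_image_def fs_ract_def tp_wf_def
  by (simp add: o_def elem_image_ract_last sum_list_const_mult cong: map_cong)

lemma fs_image_diff:
  "0 < n \<Longrightarrow> tp_wf U g n ws \<Longrightarrow>
    fs_image \<alpha> n (fs_diff zs ws) x ks = fs_image \<alpha> n zs x ks - fs_image \<alpha> n ws x ks"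
  unfolding fs_diff_def fs_image_append by (simp add: fs_image_scale)

lemma tp_wf_append: "tp_wf U g n zs \<Longrightarrow> tp_wf U g n ws \<Longrightarrow> tp_wf U g n (zs @ ws)"
  unfolding tp_wf_def by auto

lemma tp_wf_scale: "tp_wf U g n zs \<Longrightarrow> tp_wf U g n (fs_scale c zs)"
  unfolding tp_wf_def fs_scale_def
  by (auto split: list.splits intro!: sec_scale_in_sections) (metis list.set_intros(2) subsetD)

lemma tp_wf_diff: "tp_wf U g n zs \<Longrightarrow> tp_wf U g n ws \<Longrightarrow> tp_wf U g n (fs_diff zs ws)"
  unfolding fs_diff_def by (intro tp_wf_append tp_wf_scale)

lemma rip_el_foldl:
  "length xs = length ys \<Longrightarrow>
   foldl (\<lambda>f (\<xi>, \<eta>). bm_rip U \<xi> (bm_lact \<alpha> f \<eta>)) f0 (zip xs ys) =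
   (\<lambda>x. f0 ((\<alpha> ^^ length xs) x) * (\<Prod>k<length xs. fip U ((\<alpha> ^^ (length xs - 1 - k)) x)
        ((xs!k) ((\<alpha> ^^ (length xs - 1 - k)) x)) ((ys!k) ((\<alpha> ^^ (length xs - 1 - k)) x))))"
proof (induction xs arbitrary: ys f0)
  case Nil
  then show ?case by simp
next
  case (Cons a xs)
  then obtain b ys' where ys: "ys = b # ys'" "length xs = length ys'"
    by (cases ys) auto
  define m where "m = length xs"
  have step: "bm_rip U a (bm_lact \<alpha> f0 b) = (\<lambda>x. fip U x (a x) (b x) * f0 (\<alpha> x))"
    unfolding bm_rip_def bm_lact_def fip_def Let_def by (auto simp: algebra_simps)
  have "foldl (\<lambda>f (\<xi>, \<eta>). bm_rip U \<xi> (bm_lact \<alpha> f \<eta>)) f0 (zip (a # xs) ys) x =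
      f0 ((\<alpha> ^^ Suc m) x) * (fip U ((\<alpha> ^^ m) x) (a ((\<alpha> ^^ m) x)) (b ((\<alpha> ^^ m) x)) *
        (\<Prod>k<m. fip U ((\<alpha> ^^ (m - 1 - k)) x)
          ((xs!k) ((\<alpha> ^^ (m - 1 - k)) x)) ((ys'!k) ((\<alpha> ^^ (m - 1 - k)) x))))" for x
    by (simp only: ys zip_Cons_Cons foldl_Cons prod.case step Cons.IH[OF ys(2)] m_def
        funpow.simps(2) o_apply mult_ac)
  also have "\<dots>x = f0 ((\<alpha> ^^ length (a#xs)) x) *
      (\<Prod>k<length (a#xs). fip U ((\<alpha> ^^ (length (a#xs) - 1 - k)) x)
        (((a#xs)!k) ((\<alpha> ^^ (length (a#xs) - 1 - k)) x)) ((ys!k) ((\<alpha> ^^ (length (a#xs) - 1 - k)) x)))" for x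
    unfolding length_Cons m_def[symmetric] prod.lessThan_Suc_shift ys(1)
    by (simp only: nth_Cons_0 nth_Cons_Suc diff_Suc_Suc diff_Suc_1 diff_zero diff_diff_left plus_1_eq_Suc)
  finally show ?case by (rule ext)
qed

lemma rip_el_eq_prod:
  "length xs = length ys \<Longrightarrow>
   rip_el U \<alpha> xs ys x = (\<Prod>k<length xs. fip U ((\<alpha> ^^ (length xs - 1 - k)) x)
        ((xs!k) ((\<alpha> ^^ (length xs - 1 - k)) x)) ((ys!k) ((\<alpha> ^^ (length xs - 1 - k)) x)))"
  unfolding rip_el_def by (simp add: rip_el_foldl)

lemma fip_scale_right: "fip U x v (\<lambda>i. c * w i) = c * fip U x v w"
  unfolding fip_def Let_def by simp

lemma lip_el_eq_prod:
  "length xs = length ys \<Longrightarrow>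
   lip_el U \<alpha> xs ys x = (\<Prod>k<length xs. fip U ((inv \<alpha> ^^ Suc k) x)
        ((ys!k) ((inv \<alpha> ^^ Suc k) x)) ((xs!k) ((inv \<alpha> ^^ Suc k) x)))"
proof (induction xs arbitrary: ys x)
  case Nil
  then show ?case by (simp add: lip_el_def)
next
  case (Cons a xs)
  then obtain b ys' where ys: "ys = b # ys'" "length xs = length ys'"
    by (cases ys) auto
  have "lip_el U \<alpha> (a # xs) ys x =
      lip_el U \<alpha> xs ys' (inv \<alpha> x) * fip U (inv \<alpha> x) (b (inv \<alpha> x)) (a (inv \<alpha> x))"
    unfolding ys lip_el_def zip_Cons_Cons foldr_Cons o_def prod.case bm_lip_def bm_ract_def fip_scale_right ..
  then show ?case
    unfolding Cons.IH[OF ys(2)] length_Cons prod.lessThan_Suc_shift ys(1)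
    by (simp only: nth_Cons_0 nth_Cons_Suc funpow_Suc_right o_apply funpow_0 mult.commute)
qed

lemma funpow_inv_shift:
  assumes "bij f"
  shows "(f ^^ a) ((inv f ^^ (a + b)) x) = (inv f ^^ b) x"
proof -
  have "(f ^^ a) ((inv f ^^ (a + b)) x) = (f ^^ a) ((inv f ^^ a) ((inv f ^^ b) x))"
    by (simp add: funpow_add)
  also have "\<dots> = (inv f ^^ b) x"
    using fn_o_inv_fn_is_id[OF assms, of a] by (simp add: fun_eq_iff)
  finally show ?thesis .
qed

lemma lip_el_eq_rip_el:
  assumes "bij \<alpha>" "length z = n" "length w = n"
  shows "lip_el U \<alpha> z w x = rip_el U \<alpha> w z ((inv \<alpha> ^^ n) x)"
proof -
  have shift: "(\<alpha> ^^ (n - Suc k)) ((inv \<alpha> ^^ n) x) = (inv \<alpha> ^^ Suc k) x" if "k < n" for k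
    using funpow_inv_shift[OF assms(1), of "n - Suc k" "Suc k" x] that by simp
  have "lip_el U \<alpha> z w x = (\<Prod>k<n. fip U ((inv \<alpha> ^^ Suc k) x)
      ((w!k) ((inv \<alpha> ^^ Suc k) x)) ((z!k) ((inv \<alpha> ^^ Suc k) x)))"
    using lip_el_eq_prod[of z w U \<alpha> x] assms(2,3) by simp
  also have "\<dots> = (\<Prod>k<n. fip U ((\<alpha> ^^ (n - Suc k)) ((inv \<alpha> ^^ n) x))
      ((w!k) ((\<alpha> ^^ (n - Suc k)) ((inv \<alpha> ^^ n) x))) ((z!k) ((\<alpha> ^^ (n - Suc k)) ((inv \<alpha> ^^ n) x))))"
    by (rule prod.cong[OF refl]) (simp only: lessThan_iff shift)
  also have "\<dots> = rip_el U \<alpha> w z ((inv \<alpha> ^^ n) x)"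
    using rip_el_eq_prod[of w z U \<alpha> "(inv \<alpha> ^^ n) x"] assms(2,3) by simp
  finally show ?thesis .
qed

lemma fs_lip_eq_fs_rip:
  assumes "bij \<alpha>" "\<forall>z\<in>set zs. length z = n" "\<forall>w\<in>set ws. length w = n"
  shows "fs_lip U \<alpha> zs ws x = fs_rip U \<alpha> ws zs ((inv \<alpha> ^^ n) x)"
proof -
  have "fs_lip U \<alpha> zs ws x = (\<Sum>z\<leftarrow>zs. \<Sum>w\<leftarrow>ws. rip_el U \<alpha> w z ((inv \<alpha> ^^ n) x))"
    unfolding fs_lip_def
  proof (intro arg_cong[where f=sum_list] map_cong refl lip_el_eq_rip_el[OF assms(1)])
    show "z \<in> set zs \<Longrightarrow> length z = n" "w \<in> set ws \<Longrightarrow> length w = n" for z w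
      using assms(2,3) by blast+
  qed
  also have "\<dots> = fs_rip U \<alpha> ws zs ((inv \<alpha> ^^ n) x)"
    unfolding fs_rip_def by (rule sum_list_swap)
  finally show ?thesis .
qed

section \<open>The bundle V^(n)\<close>

locale bundle_power = line_bundle U g for U :: "'i \<Rightarrow> 'a::topological_space set" and g +
  fixes \<alpha> :: "'a \<Rightarrow> 'a" and n :: nat
  assumes continuous_\<alpha>: "continuous_on UNIV \<alpha>"
begin

abbreviation "PU \<equiv> pow_U \<alpha> U n"

abbreviation "PG \<equiv> pow_g \<alpha> g n"

lemma pow_U_length: "x \<in> PU ks \<Longrightarrow> length ks = n"
  unfolding pow_U_def by auto

lemma pow_U_chart: "x \<in> PU ks \<Longrightarrow> k < n \<Longrightarrow> (\<alpha> ^^ (n - 1 - k)) x \<in> U (ks ! k)"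
  unfolding pow_U_def by auto

lemma open_pow_U: "open (PU ks)"
proof (cases "length ks = n")
  case True
  then have "PU ks = (\<Inter>k\<in>{..<n}. (\<alpha> ^^ (n - 1 - k)) -` U (ks ! k))"
    unfolding pow_U_def by auto
  also have "open \<dots>"
    by (intro open_INT finite_lessThan ballI open_vimage open_chart continuous_on_funpow[OF continuous_\<alpha>])
  finally show ?thesis .
next
  case False
  then show ?thesis
    unfolding pow_U_def by simp
qed

lemma pow_U_cover: "\<exists>ks. x \<in> PU ks"
proof
  show "x \<in> PU (map (\<lambda>k. SOME i. (\<alpha> ^^ (n - 1 - k)) x \<in> U i) [0..<n])"
    unfolding pow_U_def using chart_cover by (auto intro: someI_ex)
qed

lemma is_cocycle_pow: "is_cocycle PU PG"
proof -
  have "continuous_on (PU ks \<inter> PU ls) (PG ks ls)" for ks ls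
    unfolding pow_g_def
  proof (intro continuous_on_prod)
    fix k assume "k \<in> {..<n}"
    then have "(\<alpha> ^^ (n - 1 - k)) ` (PU ks \<inter> PU ls) \<subseteq> U (ks!k) \<inter> U (ls!k)"
      using pow_U_chart by auto
    then show "continuous_on (PU ks \<inter> PU ls) (\<lambda>x. g (ks!k) (ls!k) ((\<alpha> ^^ (n - 1 - k)) x))"
      by (intro continuous_on_compose2[OF transition_continuous continuous_on_funpow[OF continuous_\<alpha>]])
  qed
  moreover have "cmod (PG ks ls x) = 1" if "x \<in> PU ks" "x \<in> PU ls" for ks ls x
    unfolding pow_g_def prod_norm[symmetric]
    by (intro prod.neutral ballI transition_norm pow_U_chart that) simp_all
  moreover have "PG ks ks x = 1" if "x \<in> PU ks" for ks x
    unfolding pow_g_def by (intro prod.neutral ballI transition_refl pow_U_chart that) simp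
  moreover have "PG ks ls x * PG ls ms x = PG ks ms x"
    if "x \<in> PU ks" "x \<in> PU ls" "x \<in> PU ms" for ks ls ms x
    unfolding pow_g_def prod.distrib[symmetric]
    by (intro prod.cong refl transition_trans pow_U_chart that) simp_all
  moreover have "(\<Union>ks. PU ks) = UNIV"
    using pow_U_cover by blast
  ultimately show ?thesis
    unfolding is_cocycle_def using open_pow_U by (intro conjI allI impI) simp_all
qed

end

sublocale bundle_power \<subseteq> pow: line_bundle "pow_U \<alpha> U n" "pow_g \<alpha> g n"
  by (rule line_bundle.intro[OF is_cocycle_pow])

context bundle_power
begin

lemma elem_image_fib:
  assumes "length \<xi>s = n" "set \<xi>s \<subseteq> sections U g"
  shows "elem_image \<alpha> n \<xi>s x \<in> fib PU PG x"
proof (rule fibI)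
  have fib: "(\<xi>s ! k) y \<in> fib U g y" if "k < n" for k y
    by (rule sectionsD(1)) (use assms that in auto)
  fix ks ls
  show "elem_image \<alpha> n \<xi>s x ks = 0" if "x \<notin> PU ks"
  proof (cases "length ks = n")
    case True
    with that obtain k where k: "k < n" "(\<alpha> ^^ (n - 1 - k)) x \<notin> U (ks ! k)"
      unfolding pow_U_def by auto
    then show ?thesis
      unfolding elem_image_eq using True fib_zero[OF fib[OF k(1)] k(2)] by (auto intro: prod_zero)
  qed (simp add: elem_image_eq)
  show "elem_image \<alpha> n \<xi>s x ks = PG ks ls x * elem_image \<alpha> n \<xi>s x ls"
    if xks: "x \<in> PU ks" and xls: "x \<in> PU ls"
  proof -
    have "(\<xi>s!k) ((\<alpha>^^(n-1-k)) x) (ks!k) =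
        g (ks!k) (ls!k) ((\<alpha>^^(n-1-k)) x) * (\<xi>s!k) ((\<alpha>^^(n-1-k)) x) (ls!k)" if "k < n" for k
      by (rule fib_trans[OF fib[OF that] pow_U_chart[OF xks that] pow_U_chart[OF xls that]])
    then have "(\<Prod>k<n. (\<xi>s!k) ((\<alpha>^^(n-1-k)) x) (ks!k)) =
        (\<Prod>k<n. g (ks!k) (ls!k) ((\<alpha>^^(n-1-k)) x) * (\<xi>s!k) ((\<alpha>^^(n-1-k)) x) (ls!k))"
      by (intro prod.cong) simp_all
    then show ?thesis
      unfolding elem_image_eq pow_g_def using pow_U_length[OF xks] pow_U_length[OF xls]
      by (simp add: prod.distrib)
  qed
qed

lemma elem_image_in_sections:
  assumes "length \<xi>s = n" "set \<xi>s \<subseteq> sections U g"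
  shows "elem_image \<alpha> n \<xi>s \<in> sections PU PG"
proof (rule sectionsI[OF elem_image_fib[OF assms]])
  fix ks
  show "continuous_on (PU ks) (\<lambda>x. elem_image \<alpha> n \<xi>s x ks)"
  proof (cases "length ks = n")
    case True
    have "continuous_on (PU ks) (\<lambda>x. (\<xi>s!k) ((\<alpha>^^(n-1-k)) x) (ks!k))" if "k < n" for k
    proof (rule continuous_on_compose2[OF _ continuous_on_funpow[OF continuous_\<alpha>]])
      show "continuous_on (U (ks!k)) (\<lambda>y. (\<xi>s!k) y (ks!k))"
        by (rule sectionsD(2)) (use assms that in auto)
    qed (use pow_U_chart that in auto)
    then show ?thesis
      unfolding elem_image_eq using True by (auto intro: continuous_on_prod)
  next
    case False
    then show ?thesis
      unfolding pow_U_def by simp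
  qed
qed

lemma fs_image_in_sections: "tp_wf U g n zs \<Longrightarrow> fs_image \<alpha> n zs \<in> sections PU PG"
proof (induction zs)
  case Nil
  then show ?case by (simp add: fs_image_Nil zero_in_sections)
next
  case (Cons z zs)
  then show ?case
    unfolding fs_image_Cons tp_wf_def by (intro sec_add_in_sections elem_image_in_sections) auto
qed

lemma rip_el_chart:
  assumes "length z = n" "set z \<subseteq> sections U g" "length w = n" "set w \<subseteq> sections U g"
    and "x \<in> PU ks"
  shows "rip_el U \<alpha> z w x = cnj (elem_image \<alpha> n z x ks) * elem_image \<alpha> n w x ks"
proof -
  have "rip_el U \<alpha> z w x =
      (\<Prod>k<n. fip U ((\<alpha>^^(n-1-k)) x) ((z!k) ((\<alpha>^^(n-1-k)) x)) ((w!k) ((\<alpha>^^(n-1-k)) x)))"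
    using rip_el_eq_prod[of z w U \<alpha> x] assms(1,3) by simp
  also have "\<dots> = (\<Prod>k<n. cnj ((z!k) ((\<alpha>^^(n-1-k)) x) (ks!k)) * (w!k) ((\<alpha>^^(n-1-k)) x) (ks!k))"
  proof (rule prod.cong[OF refl])
    fix k assume "k \<in> {..<n}"
    then have k: "k < n" by simp
    then have "z ! k \<in> sections U g" "w ! k \<in> sections U g"
      using assms(1-4) by auto
    then show "fip U ((\<alpha>^^(n-1-k)) x) ((z!k) ((\<alpha>^^(n-1-k)) x)) ((w!k) ((\<alpha>^^(n-1-k)) x)) =
        cnj ((z!k) ((\<alpha>^^(n-1-k)) x) (ks!k)) * (w!k) ((\<alpha>^^(n-1-k)) x) (ks!k)"
      by (intro fip_chart sectionsD(1) pow_U_chart[OF assms(5) k])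
  qed
  also have "\<dots> = cnj (elem_image \<alpha> n z x ks) * elem_image \<alpha> n w x ks"
    unfolding elem_image_eq using pow_U_length[OF assms(5)] by (simp add: prod.distrib)
  finally show ?thesis .
qed

lemma fs_rip_chart:
  assumes "tp_wf U g n zs" "tp_wf U g n ws" "x \<in> PU ks"
  shows "fs_rip U \<alpha> zs ws x = cnj (fs_image \<alpha> n zs x ks) * fs_image \<alpha> n ws x ks"
proof -
  have "fs_rip U \<alpha> zs ws x =
      (\<Sum>z\<leftarrow>zs. \<Sum>w\<leftarrow>ws. cnj (elem_image \<alpha> n z x ks) * elem_image \<alpha> n w x ks)"
    unfolding fs_rip_def
  proof (intro arg_cong[where f=sum_list] map_cong refl rip_el_chart[OF _ _ _ _ assms(3)])
    show "length z = n" "set z \<subseteq> sections U g" if "z \<in> set zs" for z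
      using assms(1) that unfolding tp_wf_def by auto
    show "length w = n" "set w \<subseteq> sections U g" if "w \<in> set ws" for w
      using assms(2) that unfolding tp_wf_def by auto
  qed
  then show ?thesis
    unfolding fs_image_def by (simp only: sum_list_sesquilinear)
qed

lemma fs_rip_eq_bm_rip:
  assumes "tp_wf U g n zs" "tp_wf U g n ws"
  shows "fs_rip U \<alpha> zs ws = bm_rip PU (fs_image \<alpha> n zs) (fs_image \<alpha> n ws)"
proof
  fix x
  obtain ks where ks: "x \<in> PU ks"
    using pow_U_cover by blast
  show "fs_rip U \<alpha> zs ws x = bm_rip PU (fs_image \<alpha> n zs) (fs_image \<alpha> n ws) x"
    unfolding bm_rip_def fs_rip_chart[OF assms ks]
    by (intro pow.fip_chart[symmetric] sectionsD(1) fs_image_in_sections assms ks)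
qed

lemma elem_image_chart_sections:
  assumes "length cs = n" "x \<in> PU ls" and vanish: "\<And>k y. k < n \<Longrightarrow> y \<notin> U (cs ! k) \<Longrightarrow> \<phi> k y = 0"
  shows "elem_image \<alpha> n (map (\<lambda>k. chart_section (cs ! k) (\<phi> k)) [0..<n]) x ls =
    (\<Prod>k<n. \<phi> k ((\<alpha> ^^ (n - 1 - k)) x)) * PG ls cs x"
proof -
  have "elem_image \<alpha> n (map (\<lambda>k. chart_section (cs ! k) (\<phi> k)) [0..<n]) x ls =
      (\<Prod>k<n. chart_section (cs ! k) (\<phi> k) ((\<alpha> ^^ (n - 1 - k)) x) (ls ! k))"
    unfolding elem_image_eq using pow_U_length[OF assms(2)] by simp
  also have "\<dots> = (\<Prod>k<n. \<phi> k ((\<alpha> ^^ (n - 1 - k)) x) * g (ls!k) (cs!k) ((\<alpha> ^^ (n - 1 - k)) x))"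
  proof (rule prod.cong[OF refl])
    fix k assume "k \<in> {..<n}"
    then have k: "k < n" by simp
    show "chart_section (cs ! k) (\<phi> k) ((\<alpha> ^^ (n - 1 - k)) x) (ls ! k) =
        \<phi> k ((\<alpha> ^^ (n - 1 - k)) x) * g (ls!k) (cs!k) ((\<alpha> ^^ (n - 1 - k)) x)"
      by (rule chart_section_coord[OF pow_U_chart[OF assms(2) k] vanish[OF k]])
  qed
  finally show ?thesis
    unfolding pow_g_def by (simp add: prod.distrib)
qed

end

section \<open>Sections of V^(n) as finite sums of elementary tensors\<close>

locale section_expansion = bundle_power U g \<alpha> n
  for U :: "'i \<Rightarrow> 'a::topological_space set" and g \<alpha> n +
  fixes ps :: "'p list" and \<rho> :: "'p \<Rightarrow> 'a \<Rightarrow> real" and C :: "'p \<Rightarrow> 'a set" and c :: "'p \<Rightarrow> 'i"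
    and \<eta> :: "'a \<Rightarrow> 'i list \<Rightarrow> complex"
  assumes n_pos: "0 < n"
    and \<rho>_continuous: "\<And>p. continuous_on UNIV (\<rho> p)" and \<rho>_nonneg: "\<And>p y. 0 \<le> \<rho> p y"
    and C_closed: "\<And>p. closed (C p)" and C_chart: "\<And>p. C p \<subseteq> U (c p)"
    and \<rho>_support: "\<And>p y. y \<notin> C p \<Longrightarrow> \<rho> p y = 0" and \<rho>_sum: "\<And>y. (\<Sum>p\<leftarrow>ps. \<rho> p y) = 1"
    and \<eta>_section: "\<eta> \<in> sections (pow_U \<alpha> U n) (pow_g \<alpha> g n)"
begin

(* Slot k < n - 1 of piece js carries sqrt (\<rho> (js ! k)). The last slot carries the coordinate
   of \<eta> in the chart map c js, which is continuous only on that chart; the cutoff confines it to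
   a closed subset of the chart, and its square roots pair with those of the other slots, so that
   piece js maps to \<eta> times a product of \<rho>'s. *)

definition cutoff :: "'p list \<Rightarrow> 'a \<Rightarrow> real" where
  "cutoff js y = \<rho> (js ! (n - 1)) y * (\<Prod>k<n - 1. sqrt (\<rho> (js ! k) ((\<alpha> ^^ (n - 1 - k)) y)))"

definition factor :: "'p list \<Rightarrow> nat \<Rightarrow> 'a \<Rightarrow> complex" where
  "factor js k = (if k = n - 1 then (\<lambda>y. \<eta> y (map c js) * cutoff js y) else (\<lambda>y. sqrt (\<rho> (js ! k) y)))"

definition piece :: "'p list \<Rightarrow> ('a \<Rightarrow> 'i \<Rightarrow> complex) list" where
  "piece js = map (\<lambda>k. chart_section (c (js ! k)) (factor js k)) [0..<n]"

lemma cutoff_vanishes: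
  assumes "k < n" "(\<alpha> ^^ (n - 1 - k)) y \<notin> C (js ! k)"
  shows "cutoff js y = 0"
proof (cases "k = n - 1")
  case True
  then show ?thesis
    using assms \<rho>_support by (simp add: cutoff_def)
next
  case False
  then have "k \<in> {..<n - 1}" "sqrt (\<rho> (js ! k) ((\<alpha> ^^ (n - 1 - k)) y)) = 0"
    using assms \<rho>_support by auto
  then have "(\<Prod>k<n - 1. sqrt (\<rho> (js ! k) ((\<alpha> ^^ (n - 1 - k)) y))) = 0"
    by (intro prod_zero finite_lessThan) blast
  then show ?thesis
    unfolding cutoff_def by simp
qed

lemma cutoff_continuous: "continuous_on UNIV (cutoff js)"
proof -
  have "continuous_on UNIV (\<lambda>y. sqrt (\<rho> p ((\<alpha> ^^ j) y)))" for p j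
    by (intro continuous_on_real_sqrt continuous_on_compose2[OF \<rho>_continuous continuous_on_funpow[OF continuous_\<alpha>]])
      simp
  then show ?thesis
    unfolding cutoff_def by (intro continuous_on_mult \<rho>_continuous continuous_on_prod) blast
qed

lemma factor_continuous:
  assumes "length js = n"
  shows "continuous_on UNIV (factor js k)"
proof -
  define K where "K = (\<Inter>k\<in>{..<n}. (\<alpha> ^^ (n - 1 - k)) -` C (js ! k))"
  have "closed K"
    unfolding K_def
    by (intro closed_INT ballI closed_vimage C_closed continuous_on_funpow[OF continuous_\<alpha>])
  moreover have "K \<subseteq> PU (map c js)"
    using C_chart assms unfolding K_def pow_U_def by auto
  moreover have "continuous_on (UNIV \<inter> PU (map c js)) (\<lambda>y. \<eta> y (map c js) * cutoff js y)"
    using sectionsD(2)[OF \<eta>_section] continuous_on_subset[OF cutoff_continuous]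
    by (intro continuous_on_mult continuous_on_of_real) simp_all
  moreover have "\<eta> y (map c js) * cutoff js y = 0" if "y \<notin> K" for y
  proof -
    obtain k where "k < n" "(\<alpha> ^^ (n - 1 - k)) y \<notin> C (js ! k)"
      using \<open>y \<notin> K\<close> unfolding K_def by blast
    then show ?thesis
      by (simp add: cutoff_vanishes)
  qed
  ultimately have "continuous_on UNIV (\<lambda>y. \<eta> y (map c js) * cutoff js y)"
    by (intro continuous_on_vanishing_off_closed[OF open_pow_U open_UNIV])
  moreover have "continuous_on UNIV (\<lambda>y. complex_of_real (sqrt (\<rho> p y)))" for p
    by (intro continuous_on_of_real continuous_on_real_sqrt \<rho>_continuous)
  ultimately show ?thesis
    unfolding factor_def by simp
qed

lemma factor_support:
  assumes "k < n" "y \<notin> C (js ! k)"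
  shows "factor js k y = 0"
proof (cases "k = n - 1")
  case True
  then have "cutoff js y = 0"
    using cutoff_vanishes[OF assms(1)] assms(2) by simp
  then show ?thesis
    using True by (simp add: factor_def)
qed (use assms \<rho>_support in \<open>simp add: factor_def\<close>)

lemma piece_wf:
  assumes "length js = n"
  shows "length (piece js) = n" and "set (piece js) \<subseteq> sections U g"
proof -
  show "length (piece js) = n"
    by (simp add: piece_def)
  have "chart_section (c (js ! k)) (factor js k) \<in> sections U g" if "k < n" for k
    by (rule chart_section_in_sections[OF factor_continuous[OF assms] C_closed C_chart factor_support[OF that]])
  then show "set (piece js) \<subseteq> sections U g"
    by (auto simp: piece_def)
qed

lemma prod_factor:
  "(\<Prod>k<n. factor js k ((\<alpha> ^^ (n - 1 - k)) x)) =
    \<eta> x (map c js) * (\<Prod>k<n. \<rho> (js!k) ((\<alpha> ^^ (n - 1 - k)) x))"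
proof -
  obtain m where m: "n = Suc m"
    using n_pos by (cases n) auto
  define r where "r = (\<Prod>k<m. sqrt (\<rho> (js!k) ((\<alpha> ^^ (m - k)) x)))"
  have "r * r = (\<Prod>k<m. \<rho> (js!k) ((\<alpha> ^^ (m - k)) x))"
    unfolding r_def by (simp add: prod.distrib[symmetric] \<rho>_nonneg)
  then have "r * cutoff js x = (\<Prod>k<n. \<rho> (js!k) ((\<alpha> ^^ (n - 1 - k)) x))"
    unfolding cutoff_def r_def by (simp add: m algebra_simps)
  moreover have "(\<Prod>k<n. factor js k ((\<alpha> ^^ (n - 1 - k)) x)) =
      (\<Prod>k<m. factor js k ((\<alpha> ^^ (n - 1 - k)) x)) * factor js m ((\<alpha> ^^ (n - 1 - m)) x)"
    by (simp add: m)
  moreover have "(\<Prod>k<m. factor js k ((\<alpha> ^^ (n - 1 - k)) x)) = of_real r"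
    unfolding r_def of_real_prod factor_def by (intro prod.cong refl) (simp add: m)
  moreover have "factor js m ((\<alpha> ^^ (n - 1 - m)) x) = \<eta> x (map c js) * cutoff js x"
    unfolding factor_def by (simp add: m)
  ultimately show ?thesis
    by (simp flip: of_real_mult)
qed

lemma elem_image_piece_chart:
  assumes "length js = n" "x \<in> PU ls"
  shows "elem_image \<alpha> n (piece js) x ls =
    \<eta> x (map c js) * (\<Prod>k<n. \<rho> (js!k) ((\<alpha> ^^ (n - 1 - k)) x)) * PG ls (map c js) x"
proof -
  have "elem_image \<alpha> n (piece js) x ls =
      elem_image \<alpha> n (map (\<lambda>k. chart_section (map c js ! k) (factor js k)) [0..<n]) x ls"
    unfolding piece_def using assms(1)
    by (intro arg_cong[where f="\<lambda>zs. elem_image \<alpha> n zs x ls"] map_cong refl) simp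
  also have "\<dots> = (\<Prod>k<n. factor js k ((\<alpha> ^^ (n - 1 - k)) x)) * PG ls (map c js) x"
  proof (rule elem_image_chart_sections[OF _ assms(2)])
    show "length (map c js) = n"
      using assms(1) by simp
    show "factor js k y = 0" if "k < n" "y \<notin> U (map c js ! k)" for k y
      using that assms(1) C_chart[of "js ! k"] by (intro factor_support) auto
  qed
  finally show ?thesis
    unfolding prod_factor .
qed

lemma elem_image_piece:
  assumes "length js = n" "x \<in> PU ls"
  shows "elem_image \<alpha> n (piece js) x ls = \<eta> x ls * (\<Prod>k<n. \<rho> (js!k) ((\<alpha> ^^ (n - 1 - k)) x))"
proof (cases "(\<Prod>k<n. \<rho> (js!k) ((\<alpha> ^^ (n - 1 - k)) x)) = 0")
  case False
  then have "(\<alpha> ^^ (n - 1 - k)) x \<in> C (js!k)" if "k < n" for k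
    using that \<rho>_support by (auto simp: prod_zero_iff)
  then have "x \<in> PU (map c js)"
    using assms(1) C_chart unfolding pow_U_def by auto
  with fib_trans[OF sectionsD(1)[OF \<eta>_section] assms(2)] show ?thesis
    by (simp add: elem_image_piece_chart[OF assms])
qed (simp add: elem_image_piece_chart[OF assms])

lemma fs_image_pieces:
  shows "tp_wf U g n (map piece (List.n_lists n ps))"
    and "fs_image \<alpha> n (map piece (List.n_lists n ps)) = \<eta>"
proof -
  show wf: "tp_wf U g n (map piece (List.n_lists n ps))"
    unfolding tp_wf_def using piece_wf[OF length_n_lists_elem] by auto
  have agree: "fs_image \<alpha> n (map piece (List.n_lists n ps)) x ls = \<eta> x ls" if "x \<in> PU ls" for x ls
  proof -
    have "fs_image \<alpha> n (map piece (List.n_lists n ps)) x ls =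
        (\<Sum>js\<leftarrow>List.n_lists n ps. \<eta> x ls * of_real (\<Prod>k<n. \<rho> (js!k) ((\<alpha> ^^ (n - 1 - k)) x)))"
      unfolding fs_image_def map_map o_def
      by (intro arg_cong[where f=sum_list] map_cong refl elem_image_piece length_n_lists_elem that)
    also have "\<dots> = \<eta> x ls * of_real (\<Sum>js\<leftarrow>List.n_lists n ps. \<Prod>k<n. \<rho> (js!k) ((\<alpha> ^^ (n - 1 - k)) x))"
      by (simp only: sum_list_const_mult sum_list_of_real[symmetric] map_map o_def)
    also have "\<dots> = \<eta> x ls"
      by (simp only: sum_list_n_lists_prod[of "\<lambda>k p. \<rho> p ((\<alpha> ^^ (n - 1 - k)) x)"] \<rho>_sum
          prod.neutral_const of_real_1 mult_1_right)
    finally show ?thesis .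
  qed
  then show "fs_image \<alpha> n (map piece (List.n_lists n ps)) = \<eta>"
  proof (intro ext)
    fix x ks
    obtain ls where ls: "x \<in> PU ls"
      using pow_U_cover by blast
    have "fs_image \<alpha> n (map piece (List.n_lists n ps)) x = \<eta> x"
      using fib_eqI[OF sectionsD(1)[OF fs_image_in_sections[OF wf]] sectionsD(1)[OF \<eta>_section] ls]
        agree[OF ls] by blast
    then show "fs_image \<alpha> n (map piece (List.n_lists n ps)) x ks = \<eta> x ks"
      by simp
  qed
qed

end

section \<open>Cauchy sequences of formal sums\<close>

(* \<psi> on Cauchy sequences of formal sums; lim is junk unless the pointwise limits exist. *)
definition tp_image ::
    "('a \<Rightarrow> 'a) \<Rightarrow> nat \<Rightarrow> (nat \<Rightarrow> ('a \<Rightarrow> 'i \<Rightarrow> complex) list list) \<Rightarrow> 'a \<Rightarrow> 'i list \<Rightarrow> complex" where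
  "tp_image \<alpha> n Z = (\<lambda>x ks. lim (\<lambda>k. fs_image \<alpha> n (Z k) x ks))"

lemma tp_image_eqI: "(\<And>x ks. (\<lambda>k. fs_image \<alpha> n (Z k) x ks) \<longlonglongrightarrow> \<xi> x ks) \<Longrightarrow> tp_image \<alpha> n Z = \<xi>"
  unfolding tp_image_def by (intro ext limI)

lemma tp_image_const: "tp_image \<alpha> n (\<lambda>k. zs) = fs_image \<alpha> n zs"
  by (rule tp_image_eqI) simp

lemma unif_conv_iff_uniform_limit: "unif_conv F f \<longleftrightarrow> uniform_limit UNIV F f sequentially"
  by (simp add: unif_conv_def uniform_limit_sequentially_iff dist_norm)

lemma bounded_range_cnj: "bounded (range f) \<Longrightarrow> bounded (range (\<lambda>x. cnj (f x)))"
  by (simp add: bounded_iff)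

locale compact_bundle_power = bundle_power U g \<alpha> n
  for U :: "'i \<Rightarrow> 'a::metric_space set" and g \<alpha> n +
  assumes compact_space: "compact (UNIV :: 'a set)" and n_pos: "0 < n"
begin

lemma fs_rip_self_chart:
  assumes "tp_wf U g n zs" "x \<in> PU ks"
  shows "cmod (fs_rip U \<alpha> zs zs x) = (cmod (fs_image \<alpha> n zs x ks))\<^sup>2"
  using fs_rip_chart[OF assms(1) assms(1) assms(2)] by (simp add: norm_mult power2_eq_square)

lemma bdd_above_fs_rip:
  assumes "tp_wf U g n zs"
  shows "bdd_above (range (\<lambda>x. cmod (fs_rip U \<alpha> zs zs x)))"
proof -
  have "continuous_on UNIV (fs_rip U \<alpha> zs zs)"
    unfolding fs_rip_eq_bm_rip[OF assms assms]
    by (intro pow.continuous_on_bm_rip fs_image_in_sections assms)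
  then have "bounded (range (fs_rip U \<alpha> zs zs))"
    by (intro compact_imp_bounded compact_continuous_image compact_space)
  then show ?thesis
    by (auto simp: bounded_iff bdd_above_def)
qed

lemma norm_fs_image_le_fs_norm:
  assumes "tp_wf U g n zs"
  shows "cmod (fs_image \<alpha> n zs x ks) \<le> fs_norm U \<alpha> zs"
proof -
  have "(cmod (fs_image \<alpha> n zs x ks))\<^sup>2 \<le> cmod (fs_rip U \<alpha> zs zs x)"
  proof (cases "x \<in> PU ks")
    case True
    then show ?thesis
      by (simp add: fs_rip_self_chart[OF assms])
  next
    case False
    then show ?thesis
      using fib_zero[OF sectionsD(1)[OF fs_image_in_sections[OF assms]] False] by simp
  qed
  also have "\<dots> \<le> Sup (range (\<lambda>x. cmod (fs_rip U \<alpha> zs zs x)))"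
    by (rule cSup_upper[OF _ bdd_above_fs_rip[OF assms]]) simp
  finally show ?thesis
    unfolding fs_norm_def by (rule real_le_rsqrt)
qed

lemma fs_norm_nonneg: "tp_wf U g n zs \<Longrightarrow> 0 \<le> fs_norm U \<alpha> zs"
  using norm_fs_image_le_fs_norm norm_ge_zero order_trans by blast

lemma fs_norm_le:
  assumes "tp_wf U g n zs" and bound: "\<And>x ks. cmod (fs_image \<alpha> n zs x ks) \<le> B"
  shows "fs_norm U \<alpha> zs \<le> B"
proof -
  have "0 \<le> B"
    using bound[of undefined undefined] norm_ge_zero order_trans by blast
  have "Sup (range (\<lambda>x. cmod (fs_rip U \<alpha> zs zs x))) \<le> B\<^sup>2"
  proof (rule cSup_least)
    fix r assume "r \<in> range (\<lambda>x. cmod (fs_rip U \<alpha> zs zs x))"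
    then obtain x where r: "r = cmod (fs_rip U \<alpha> zs zs x)"
      by blast
    obtain ks where "x \<in> PU ks"
      using pow_U_cover by blast
    then show "r \<le> B\<^sup>2"
      using fs_rip_self_chart[OF assms(1)] r bound[of x ks] \<open>0 \<le> B\<close> by (simp add: power_mono)
  qed simp
  then show ?thesis
    unfolding fs_norm_def using \<open>0 \<le> B\<close> by (simp add: real_sqrt_le_iff[symmetric, of _ "B\<^sup>2"])
qed

lemma tp_cauchy_wf: "tp_cauchy U g \<alpha> n Z \<Longrightarrow> tp_wf U g n (Z k)"
  unfolding tp_cauchy_def by blast

lemma tp_cauchy_const:
  assumes "tp_wf U g n zs"
  shows "tp_cauchy U g \<alpha> n (\<lambda>k. zs)"
proof -
  have "fs_norm U \<alpha> (fs_diff zs zs) \<le> 0"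
    by (rule fs_norm_le[OF tp_wf_diff[OF assms assms]]) (simp add: fs_image_diff[OF n_pos assms])
  then show ?thesis
    unfolding tp_cauchy_def using assms by (auto intro: order_le_less_trans)
qed

lemma norm_fs_image_diff_le:
  assumes "tp_wf U g n zs" "tp_wf U g n ws"
  shows "cmod (fs_image \<alpha> n zs x ks - fs_image \<alpha> n ws x ks) \<le> fs_norm U \<alpha> (fs_diff zs ws)"
  using norm_fs_image_le_fs_norm[OF tp_wf_diff[OF assms]] by (simp add: fs_image_diff[OF n_pos assms(2)])

lemma uniform_limit_tp_image:
  assumes Z: "tp_cauchy U g \<alpha> n Z"
  shows "uniform_limit UNIV (\<lambda>k (x, ks). fs_image \<alpha> n (Z k) x ks) (\<lambda>(x, ks). tp_image \<alpha> n Z x ks) sequentially"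
proof -
  have "uniformly_Cauchy_on UNIV (\<lambda>k (x, ks). fs_image \<alpha> n (Z k) x ks)"
  proof (rule uniformly_Cauchy_onI)
    fix e :: real assume "0 < e"
    then obtain N where N: "\<forall>m\<ge>N. \<forall>k\<ge>N. fs_norm U \<alpha> (fs_diff (Z m) (Z k)) < e"
      using Z unfolding tp_cauchy_def by blast
    have "dist (fs_image \<alpha> n (Z m) x ks) (fs_image \<alpha> n (Z k) x ks) < e" if "m \<ge> N" "k \<ge> N" for m k x ks
      using norm_fs_image_diff_le[OF tp_cauchy_wf[OF Z, of m] tp_cauchy_wf[OF Z, of k], of x ks] N that
      by (simp add: dist_norm order_le_less_trans)
    then show "\<exists>M. \<forall>p\<in>UNIV. \<forall>m\<ge>M. \<forall>k\<ge>M.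
        dist ((\<lambda>k (x, ks). fs_image \<alpha> n (Z k) x ks) m p) ((\<lambda>k (x, ks). fs_image \<alpha> n (Z k) x ks) k p) < e"
      by (intro exI[of _ N]) (simp add: case_prod_unfold)
  qed
  then obtain l where l: "uniform_limit UNIV (\<lambda>k (x, ks). fs_image \<alpha> n (Z k) x ks) l sequentially"
    unfolding uniformly_convergent_eq_Cauchy[symmetric] uniformly_convergent_on_def by blast
  moreover have "l = (\<lambda>(x, ks). tp_image \<alpha> n Z x ks)"
  proof (intro ext, clarify)
    fix x ks
    have "(\<lambda>k. fs_image \<alpha> n (Z k) x ks) \<longlonglongrightarrow> l (x, ks)"
      using tendsto_uniform_limitI[OF l, of "(x, ks)"] by simp
    then show "l (x, ks) = tp_image \<alpha> n Z x ks"
      unfolding tp_image_def by (simp add: limI)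
  qed
  ultimately show ?thesis by simp
qed

lemma tp_image_tendsto:
  "tp_cauchy U g \<alpha> n Z \<Longrightarrow> (\<lambda>k. fs_image \<alpha> n (Z k) x ks) \<longlonglongrightarrow> tp_image \<alpha> n Z x ks"
  using tendsto_uniform_limitI[OF uniform_limit_tp_image, of Z "(x, ks)"] by simp

lemma tp_image_in_sections: "tp_cauchy U g \<alpha> n Z \<Longrightarrow> tp_image \<alpha> n Z \<in> sections PU PG"
  by (rule sections_uniform_limit[OF fs_image_in_sections[OF tp_cauchy_wf] uniform_limit_tp_image])

lemma fs_norm_diff_tendsto_0:
  assumes Z: "tp_cauchy U g \<alpha> n Z" and W: "tp_cauchy U g \<alpha> n W"
    and eq: "tp_image \<alpha> n Z = tp_image \<alpha> n W"
  shows "(\<lambda>k. fs_norm U \<alpha> (fs_diff (Z k) (W k))) \<longlonglongrightarrow> 0"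
proof (rule tendstoI)
  fix e :: real assume "0 < e"
  have "uniform_limit UNIV (\<lambda>k p. (case p of (x, ks) \<Rightarrow> fs_image \<alpha> n (Z k) x ks) -
      (case p of (x, ks) \<Rightarrow> fs_image \<alpha> n (W k) x ks)) (\<lambda>p. 0) sequentially"
    using uniform_limit_minus[OF uniform_limit_tp_image[OF Z] uniform_limit_tp_image[OF W]]
    by (simp add: eq case_prod_unfold)
  from uniform_limitD[OF this, of "e / 2"] \<open>0 < e\<close>
  have "\<forall>\<^sub>F k in sequentially. \<forall>x ks. cmod (fs_image \<alpha> n (Z k) x ks - fs_image \<alpha> n (W k) x ks) < e / 2"
    by (simp add: dist_norm)
  then show "\<forall>\<^sub>F k in sequentially. dist (fs_norm U \<alpha> (fs_diff (Z k) (W k))) 0 < e"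
  proof eventually_elim
    case (elim k)
    have wf: "tp_wf U g n (Z k)" "tp_wf U g n (W k)"
      using Z W by (simp_all add: tp_cauchy_wf)
    have "fs_norm U \<alpha> (fs_diff (Z k) (W k)) \<le> e / 2"
      using elim by (intro fs_norm_le tp_wf_diff wf) (simp add: fs_image_diff[OF n_pos wf(2)] less_imp_le)
    then show ?case
      using fs_norm_nonneg[OF tp_wf_diff[OF wf]] \<open>0 < e\<close> by simp
  qed
qed

lemma tp_image_eqI_fs_norm_diff:
  assumes Z: "tp_cauchy U g \<alpha> n Z" and W: "tp_cauchy U g \<alpha> n W"
    and lim: "(\<lambda>k. fs_norm U \<alpha> (fs_diff (Z k) (W k))) \<longlonglongrightarrow> 0"
  shows "tp_image \<alpha> n Z = tp_image \<alpha> n W"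
proof (intro ext)
  fix x ks
  have "(\<lambda>k. fs_image \<alpha> n (Z k) x ks - fs_image \<alpha> n (W k) x ks) \<longlonglongrightarrow> 0"
    using norm_fs_image_diff_le[OF tp_cauchy_wf[OF Z] tp_cauchy_wf[OF W]]
    by (intro Lim_null_comparison[OF _ lim] always_eventually allI)
  moreover have "(\<lambda>k. fs_image \<alpha> n (Z k) x ks - fs_image \<alpha> n (W k) x ks) \<longlonglongrightarrow>
      tp_image \<alpha> n Z x ks - tp_image \<alpha> n W x ks"
    by (intro tendsto_diff tp_image_tendsto Z W)
  ultimately show "tp_image \<alpha> n Z x ks = tp_image \<alpha> n W x ks"
    using LIMSEQ_unique by fastforce
qed

lemma tp_image_eq_iff:
  "tp_cauchy U g \<alpha> n Z \<Longrightarrow> tp_cauchy U g \<alpha> n W \<Longrightarrow>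
    tp_image \<alpha> n Z = tp_image \<alpha> n W \<longleftrightarrow> (\<lambda>k. fs_norm U \<alpha> (fs_diff (Z k) (W k))) \<longlonglongrightarrow> 0"
  using fs_norm_diff_tendsto_0 tp_image_eqI_fs_norm_diff by blast

lemma tp_image_append:
  "tp_cauchy U g \<alpha> n Z \<Longrightarrow> tp_cauchy U g \<alpha> n W \<Longrightarrow>
    tp_image \<alpha> n (\<lambda>k. Z k @ W k) = sec_add (tp_image \<alpha> n Z) (tp_image \<alpha> n W)"
  unfolding sec_add_def by (intro tp_image_eqI) (simp add: fs_image_append tendsto_add tp_image_tendsto)

lemma tp_image_scale:
  "tp_cauchy U g \<alpha> n Z \<Longrightarrow> tp_image \<alpha> n (\<lambda>k. fs_scale c (Z k)) = sec_scale c (tp_image \<alpha> n Z)"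
  unfolding sec_scale_def
  by (intro tp_image_eqI) (simp add: fs_image_scale[OF n_pos tp_cauchy_wf] tendsto_mult_left tp_image_tendsto)

lemma tp_image_ract:
  "tp_cauchy U g \<alpha> n Z \<Longrightarrow> tp_image \<alpha> n (\<lambda>k. fs_ract (Z k) f) = bm_ract (tp_image \<alpha> n Z) f"
  unfolding bm_ract_def
  by (intro tp_image_eqI) (simp add: fs_image_ract[OF n_pos tp_cauchy_wf] tendsto_mult_left tp_image_tendsto)

lemma tp_image_lact:
  "tp_cauchy U g \<alpha> n Z \<Longrightarrow> tp_image \<alpha> n (\<lambda>k. fs_lact \<alpha> f (Z k)) = bm_lact (\<alpha> ^^ n) f (tp_image \<alpha> n Z)"
  unfolding bm_lact_def
  by (intro tp_image_eqI) (simp add: fs_image_lact[OF n_pos tp_cauchy_wf] tendsto_mult_left tp_image_tendsto)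

lemma uniform_limit_fs_rip:
  assumes Z: "tp_cauchy U g \<alpha> n Z" and W: "tp_cauchy U g \<alpha> n W"
  shows "uniform_limit UNIV (\<lambda>k. fs_rip U \<alpha> (Z k) (W k))
    (bm_rip PU (tp_image \<alpha> n Z) (tp_image \<alpha> n W)) sequentially"
proof -
  define \<kappa> where "\<kappa> x = (SOME ks. x \<in> PU ks)" for x
  have bm_rip_eq: "bm_rip PU \<xi> \<zeta> = (\<lambda>x. cnj (\<xi> x (\<kappa> x)) * \<zeta> x (\<kappa> x))" for \<xi> \<zeta>
    unfolding bm_rip_def fip_def Let_def \<kappa>_def ..
  have coord: "uniform_limit UNIV (\<lambda>k x. fs_image \<alpha> n (Y k) x (\<kappa> x)) (\<lambda>x. tp_image \<alpha> n Y x (\<kappa> x)) sequentially"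
    if "tp_cauchy U g \<alpha> n Y" for Y
    using uniform_limit_compose'[OF uniform_limit_tp_image[OF that], of "\<lambda>x. (x, \<kappa> x)" UNIV] by simp
  have bounded: "bounded (range (\<lambda>x. tp_image \<alpha> n Y x (\<kappa> x)))" if "tp_cauchy U g \<alpha> n Y" for Y
  proof (rule uniform_limit_bounded[OF coord[OF that]])
    show "\<forall>\<^sub>F k in sequentially. bounded (range (\<lambda>x. fs_image \<alpha> n (Y k) x (\<kappa> x)))"
    proof (intro always_eventually allI)
      fix k
      show "bounded (range (\<lambda>x. fs_image \<alpha> n (Y k) x (\<kappa> x)))"
        unfolding bounded_iff using norm_fs_image_le_fs_norm[OF tp_cauchy_wf[OF that]] by blast
    qed
  qed simp
  show ?thesis
    unfolding fs_rip_eq_bm_rip[OF tp_cauchy_wf[OF Z] tp_cauchy_wf[OF W]] bm_rip_eq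
    by (intro uniform_lim_mult bounded_linear.uniform_limit[OF bounded_linear_cnj] coord bounded
        bounded_range_cnj Z W)
qed

lemma uniform_limit_fs_lip:
  assumes "bij \<alpha>" and Z: "tp_cauchy U g \<alpha> n Z" and W: "tp_cauchy U g \<alpha> n W"
  shows "uniform_limit UNIV (\<lambda>k. fs_lip U \<alpha> (Z k) (W k))
    (bm_lip PU (\<alpha> ^^ n) (tp_image \<alpha> n Z) (tp_image \<alpha> n W)) sequentially"
proof -
  have "fs_lip U \<alpha> (Z k) (W k) = (\<lambda>x. fs_rip U \<alpha> (W k) (Z k) ((inv \<alpha> ^^ n) x))" for k
    using tp_cauchy_wf[OF Z, of k] tp_cauchy_wf[OF W, of k] unfolding tp_wf_def
    by (intro ext fs_lip_eq_fs_rip[OF assms(1)]) auto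
  moreover have "bm_lip PU (\<alpha> ^^ n) \<xi> \<zeta> = (\<lambda>x. bm_rip PU \<zeta> \<xi> ((inv \<alpha> ^^ n) x))" for \<xi> \<zeta>
    unfolding bm_lip_def bm_rip_def inv_fn[OF assms(1)] ..
  ultimately show ?thesis
    using uniform_limit_compose'[OF uniform_limit_fs_rip[OF W Z], of "inv \<alpha> ^^ n" UNIV] by simp
qed

lemma fs_image_surj:
  assumes "\<eta> \<in> sections PU PG"
  obtains zs where "tp_wf U g n zs" "fs_image \<alpha> n zs = \<eta>"
proof (rule compact_partition_of_unity[OF compact_space open_chart chart_cover])
  fix ps :: "'a list" and \<rho> :: "'a \<Rightarrow> 'a \<Rightarrow> real" and C and c :: "'a \<Rightarrow> 'i"
  assume "\<And>p. continuous_on UNIV (\<rho> p)" "\<And>p y. 0 \<le> \<rho> p y" "\<And>p. closed (C p)"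
    "\<And>p. C p \<subseteq> U (c p)" "\<And>p y. y \<notin> C p \<Longrightarrow> \<rho> p y = 0" "\<And>y. (\<Sum>p\<leftarrow>ps. \<rho> p y) = 1"
  then interpret section_expansion U g \<alpha> n ps \<rho> C c \<eta>
    using assms n_pos by unfold_locales
  show thesis
    by (rule that[OF fs_image_pieces])
qed

lemma tp_image_surj:
  assumes "\<eta> \<in> sections PU PG"
  shows "\<exists>Z. tp_cauchy U g \<alpha> n Z \<and> tp_image \<alpha> n Z = \<eta>"
proof -
  obtain zs where "tp_wf U g n zs" "fs_image \<alpha> n zs = \<eta>"
    using fs_image_surj[OF assms] .
  then show ?thesis
    using tp_cauchy_const tp_image_const by metis
qed

end

theorem proposition3p1:
  fixes \<alpha> :: "'a::metric_space \<Rightarrow> 'a"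
    and U :: "'i \<Rightarrow> 'a set" and g :: "'i \<Rightarrow> 'i \<Rightarrow> 'a \<Rightarrow> complex" and n :: nat
  assumes "compact (UNIV :: 'a set)"
    and "bij \<alpha>" and "continuous_on UNIV \<alpha>" and "continuous_on UNIV (inv \<alpha>)"
    and "is_cocycle U g"
    and "n \<ge> 1"
  shows "\<exists>\<psi>.
     (\<forall>Z. tp_cauchy U g \<alpha> n Z \<longrightarrow> \<psi> Z \<in> sections (pow_U \<alpha> U n) (pow_g \<alpha> g n))
   \<and> (\<forall>\<eta>\<in>sections (pow_U \<alpha> U n) (pow_g \<alpha> g n). \<exists>Z. tp_cauchy U g \<alpha> n Z \<and> \<psi> Z = \<eta>)
   \<and> (\<forall>Z W. tp_cauchy U g \<alpha> n Z \<longrightarrow> tp_cauchy U g \<alpha> n W \<longrightarrow>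
        (\<psi> Z = \<psi> W \<longleftrightarrow> (\<lambda>k. fs_norm U \<alpha> (fs_diff (Z k) (W k))) \<longlonglongrightarrow> 0))
   \<and> (\<forall>Z W. tp_cauchy U g \<alpha> n Z \<longrightarrow> tp_cauchy U g \<alpha> n W \<longrightarrow>
        \<psi> (\<lambda>k. Z k @ W k) = sec_add (\<psi> Z) (\<psi> W))
   \<and> (\<forall>c Z. tp_cauchy U g \<alpha> n Z \<longrightarrow> \<psi> (\<lambda>k. fs_scale c (Z k)) = sec_scale c (\<psi> Z))
   \<and> (\<forall>f\<in>CX. \<forall>Z. tp_cauchy U g \<alpha> n Z \<longrightarrow> \<psi> (\<lambda>k. fs_ract (Z k) f) = bm_ract (\<psi> Z) f)
   \<and> (\<forall>f\<in>CX. \<forall>Z. tp_cauchy U g \<alpha> n Z \<longrightarrow> \<psi> (\<lambda>k. fs_lact \<alpha> f (Z k)) = bm_lact (\<alpha> ^^ n) f (\<psi> Z))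
   \<and> (\<forall>Z W. tp_cauchy U g \<alpha> n Z \<longrightarrow> tp_cauchy U g \<alpha> n W \<longrightarrow>
        unif_conv (\<lambda>k. fs_rip U \<alpha> (Z k) (W k)) (bm_rip (pow_U \<alpha> U n) (\<psi> Z) (\<psi> W)))
   \<and> (\<forall>Z W. tp_cauchy U g \<alpha> n Z \<longrightarrow> tp_cauchy U g \<alpha> n W \<longrightarrow>
        unif_conv (\<lambda>k. fs_lip U \<alpha> (Z k) (W k)) (bm_lip (pow_U \<alpha> U n) (\<alpha> ^^ n) (\<psi> Z) (\<psi> W)))
   \<and> (\<forall>\<xi>s. length \<xi>s = n \<and> set \<xi>s \<subseteq> sections U g \<longrightarrow>
        \<psi> (\<lambda>k. [\<xi>s]) = elem_image \<alpha> n \<xi>s)"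
proof -
  interpret compact_bundle_power U g \<alpha> n
    using assms by unfold_locales auto
  show ?thesis
    using tp_image_in_sections tp_image_surj tp_image_eq_iff tp_image_append tp_image_scale tp_image_ract
      tp_image_lact uniform_limit_fs_rip uniform_limit_fs_lip[OF assms(2)]
    by (intro exI[of _ "tp_image \<alpha> n"])
      (simp add: unif_conv_iff_uniform_limit tp_image_const fs_image_single)
qed

end
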